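(* Let $A,B,M,N,c\in\mathbb{R}$ with $B\neq0$, $c\neq0$, $A^2+4Bc>0$, and suppose $K:=-\frac{6(M+N)}{B}>0$. Set $$\varphi_1=-\frac{A+\sqrt{3(A^2+4Bc)}}{2B},\qquad \varphi_2=-\frac{A-\sqrt{3(A^2+4Bc)}}{2B}.$$ Then for every $C_1\in\mathbb{R}$ and either choice of sign, both $$u(x,y,t)=\varphi_1+\frac{\varphi_2-\varphi_1}{1+\exp\!\left(\mp\frac{\varphi_1-\varphi_2}{\sqrt K}(C_1-x-y+ct)\right)}$$ and $$u(x,y,t)=\varphi_1+\frac{\varphi_2-\varphi_1}{1-\exp\!\left(\mp\frac{\varphi_2-\varphi_1}{\sqrt K}(C_1-x-y+ct)\right)}$$ (the latter where the denominator does not vanish) are solutions of $u_t+Auu_x+Bu^2u_x+Mu_{xxx}+Nu_{xyy}=0$.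
   Context: These families correspond to the case where $P(z)=Bz^4+2Az^3-6cz^2-C_2z+C_3$ has two distinct real double roots $\varphi_1,\varphi_2$, i.e. $C_2=\frac{A(A^2+6Bc)}{B^2}$, $C_3=\frac{(A^2+6Bc)^2}{4B^3}$. *)

theory Defs
  imports "HOL-Analysis.Analysis"
begin

definition pde_solution_on ::
  "real \<Rightarrow> real \<Rightarrow> real \<Rightarrow> real \<Rightarrow> (real \<Rightarrow> real \<Rightarrow> real \<Rightarrow> real) \<Rightarrow> (real \<times> real \<times> real) set \<Rightarrow> bool"
where
  "pde_solution_on A B M N u D \<longleftrightarrow> open D \<and>
    (\<exists>ux uxx uxxx uxy uxyy ut :: real \<Rightarrow> real \<Rightarrow> real \<Rightarrow> real.
      \<forall>x y t. (x, y, t) \<in> D \<longrightarrow>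
        ((\<lambda>s. u s y t) has_real_derivative ux x y t) (at x) \<and>
        ((\<lambda>s. ux s y t) has_real_derivative uxx x y t) (at x) \<and>
        ((\<lambda>s. uxx s y t) has_real_derivative uxxx x y t) (at x) \<and>
        ((\<lambda>s. ux x s t) has_real_derivative uxy x y t) (at y) \<and>
        ((\<lambda>s. uxy x s t) has_real_derivative uxyy x y t) (at y) \<and>
        ((\<lambda>s. u x y s) has_real_derivative ut x y t) (at t) \<and>
        ut x y t + A * u x y t * ux x y t + B * (u x y t)^2 * ux x y t
          + M * uxxx x y t + N * uxyy x y t = 0)"

end

theory Submission
  imports Defs
begin

text \<open>For a travelling wave u = W(C1 - x - y + c t) the PDE reduces to the third-order ODE
  c W' - (A W + B W^2) W' - (M + N) W''' = 0. If W solves the Riccati equation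
  W' = a (W - \<phi>1)(W - \<phi>2), then W''' is a polynomial in W times W', and the ODE becomes a
  polynomial identity in W, which holds when 6 (M + N) a^2 = -B and \<phi>1, \<phi>2 are the
  given roots. Both families are the Riccati solutions \<phi>1 + (\<phi>2 - \<phi>1) / (1 \<plusminus> exp(a (\<phi>2 - \<phi>1) \<xi>)).\<close>

lemma pde_solution_on_travelling_wave:
  fixes W F G H :: "real \<Rightarrow> real" and S :: "real set"
  assumes S: "open S"
    and W: "\<And>\<xi>. \<xi> \<in> S \<Longrightarrow> (W has_real_derivative F (W \<xi>)) (at \<xi>)"
    and F: "\<And>w. (F has_real_derivative G w) (at w)"
    and GF: "\<And>w. ((\<lambda>w. G w * F w) has_real_derivative H w) (at w)"
    and ode: "\<And>w. c * F w - A * w * F w - B * w^2 * F w - (M + N) * (H w * F w) = 0"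
  shows "pde_solution_on A B M N (\<lambda>x y t. W (C1 - x - y + c*t)) {(x,y,t). C1 - x - y + c*t \<in> S}"
  unfolding pde_solution_on_def
proof (intro conjI exI allI impI)
  have "{(x,y,t). C1 - x - y + c*t \<in> S} = (\<lambda>p. C1 - fst p - fst (snd p) + c * snd (snd p)) -` S"
    by auto
  moreover have "open ((\<lambda>p. C1 - fst p - fst (snd p) + c * snd (snd p)) -` S)"
    by (rule continuous_open_vimage[OF S]) (intro continuous_intros)
  ultimately show "open {(x,y,t). C1 - x - y + c*t \<in> S}" by simp
  fix x y t :: real
  assume "(x,y,t) \<in> {(x,y,t). C1 - x - y + c*t \<in> S}"
  then have dW: "(W has_real_derivative F (W (C1 - x - y + c*t))) (at (C1 - x - y + c*t))"
    using W by simp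
  have dx: "((\<lambda>s. C1 - s - y + c*t) has_real_derivative -1) (at x)"
    and dy: "((\<lambda>s. C1 - x - s + c*t) has_real_derivative -1) (at y)"
    and dt: "((\<lambda>r. C1 - x - y + c * r) has_real_derivative c) (at t)"
    by (auto intro!: derivative_eq_intros)
  let ?U = "\<lambda>x y t. W (C1 - x - y + c*t)"
  show "((\<lambda>s. ?U s y t) has_real_derivative (\<lambda>x y t. - F (?U x y t)) x y t) (at x)"
    using DERIV_chain2[OF dW dx] by simp
  show "((\<lambda>s. - F (?U s y t)) has_real_derivative (\<lambda>x y t. G (?U x y t) * F (?U x y t)) x y t) (at x)"
    using DERIV_minus[OF DERIV_chain2[OF DERIV_chain2[OF F dW] dx]] by simp
  show "((\<lambda>s. G (?U s y t) * F (?U s y t)) has_real_derivative (\<lambda>x y t. - (H (?U x y t) * F (?U x y t))) x y t) (at x)"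
    using DERIV_chain2[OF DERIV_chain2[OF GF dW] dx] by simp
  show "((\<lambda>s. - F (?U x s t)) has_real_derivative G (?U x y t) * F (?U x y t)) (at y)"
    using DERIV_minus[OF DERIV_chain2[OF DERIV_chain2[OF F dW] dy]] by simp
  show "((\<lambda>s. G (?U x s t) * F (?U x s t)) has_real_derivative - (H (?U x y t) * F (?U x y t))) (at y)"
    using DERIV_chain2[OF DERIV_chain2[OF GF dW] dy] by simp
  show "((\<lambda>s. ?U x y s) has_real_derivative (\<lambda>x y t. F (?U x y t) * c) x y t) (at t)"
    using DERIV_chain2[OF dW dt] by simp
  show "F (?U x y t) * c + A * ?U x y t * - F (?U x y t) + B * (?U x y t)^2 * - F (?U x y t)
      + M * - (H (?U x y t) * F (?U x y t)) + N * - (H (?U x y t) * F (?U x y t)) = 0"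
    using ode[of "?U x y t"] by (simp add: algebra_simps)
qed

lemma riccati_solution_has_real_derivative:
  fixes p d a k \<xi> :: real
  defines "W \<equiv> \<lambda>\<xi>. p + d / (1 + k * exp (a*d*\<xi>))"
  assumes nz: "1 + k * exp (a*d*\<xi>) \<noteq> 0"
  shows "(W has_real_derivative a * (W \<xi> - p) * (W \<xi> - (p + d))) (at \<xi>)"
proof -
  have "(W has_real_derivative - (d * (k * (exp (a*d*\<xi>) * (a*d)))) / (1 + k * exp (a*d*\<xi>))^2) (at \<xi>)"
    unfolding W_def by (rule derivative_eq_intros refl nz)+ (simp add: power2_eq_square)
  moreover have "- (d * (k * (exp (a*d*\<xi>) * (a*d)))) / (1 + k * exp (a*d*\<xi>))^2
      = a * (W \<xi> - p) * (W \<xi> - (p + d))"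
    unfolding W_def using nz by (simp add: field_simps power2_eq_square)
  ultimately show ?thesis by simp
qed

lemma pde_solution_on_riccati_wave:
  fixes W :: "real \<Rightarrow> real" and S :: "real set"
  assumes S: "open S"
    and W: "\<And>\<xi>. \<xi> \<in> S \<Longrightarrow> (W has_real_derivative a * (W \<xi> - p) * (W \<xi> - q)) (at \<xi>)"
    and sum: "B * (p + q) = - A"
    and quad: "B * (p^2 + 4*p*q + q^2) = - 6 * c"
    and coeff: "6 * (M + N) * a^2 = - B"
  shows "pde_solution_on A B M N (\<lambda>x y t. W (C1 - x - y + c*t)) {(x,y,t). C1 - x - y + c*t \<in> S}"
proof (rule pde_solution_on_travelling_wave[OF S W])
  let ?Q = "\<lambda>w. 6*w^2 - 6*(p+q)*w + p^2 + 4*p*q + q^2"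
  show "((\<lambda>w. a*(w-p)*(w-q)) has_real_derivative a*(2*w-p-q)) (at w)"
    and "((\<lambda>w. a*(2*w-p-q) * (a*(w-p)*(w-q))) has_real_derivative a^2 * ?Q w) (at w)" for w
    by (auto intro!: derivative_eq_intros simp: algebra_simps power2_eq_square)
  fix w :: real
  have scale: "(M + N) * a^2 = - B / 6" using coeff by (simp add: field_simps)
  have "(M + N) * (a^2 * ?Q w) = ((M + N) * a^2) * ?Q w" by (simp only: mult.assoc)
  also have "\<dots> = - B / 6 * ?Q w" unfolding scale ..
  also have "\<dots> = - B * w^2 + (B * (p+q)) * w - B * (p^2 + 4*p*q + q^2) / 6"
    by (simp add: algebra_simps)
  also have "\<dots> = c - A * w - B * w^2"
    unfolding sum quad by simp
  finally have reduced: "(M + N) * (a^2 * ?Q w) = c - A * w - B * w^2" .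
  have "c * (a*(w-p)*(w-q)) - A * w * (a*(w-p)*(w-q)) - B * w^2 * (a*(w-p)*(w-q))
      - (M + N) * (a^2 * ?Q w * (a*(w-p)*(w-q)))
      = (a*(w-p)*(w-q)) * (c - A * w - B * w^2 - (M + N) * (a^2 * ?Q w))"
    by (simp add: algebra_simps)
  also have "\<dots> = 0" unfolding reduced by simp
  finally show "c * (a*(w-p)*(w-q)) - A * w * (a*(w-p)*(w-q)) - B * w^2 * (a*(w-p)*(w-q))
      - (M + N) * (a^2 * ?Q w * (a*(w-p)*(w-q))) = 0" .
qed

lemma double_roots_relations:
  fixes A B c :: real
  assumes "B \<noteq> 0" and "A^2 + 4 * B * c \<ge> 0"
  defines "\<phi>\<^sub>1 \<equiv> - (A + sqrt (3 * (A^2 + 4 * B * c))) / (2 * B)"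
    and "\<phi>\<^sub>2 \<equiv> - (A - sqrt (3 * (A^2 + 4 * B * c))) / (2 * B)"
  shows "B * (\<phi>\<^sub>1 + \<phi>\<^sub>2) = - A"
    and "B * (\<phi>\<^sub>1^2 + 4*\<phi>\<^sub>1*\<phi>\<^sub>2 + \<phi>\<^sub>2^2) = - 6 * c"
proof -
  define r where "r = sqrt (3 * (A^2 + 4 * B * c))"
  have r2: "r^2 = 3 * (A^2 + 4 * B * c)"
    unfolding r_def using assms(2) by simp
  show "B * (\<phi>\<^sub>1 + \<phi>\<^sub>2) = - A"
    unfolding \<phi>\<^sub>1_def \<phi>\<^sub>2_def using assms(1) by (simp add: field_simps)
  have "B * (\<phi>\<^sub>1^2 + 4*\<phi>\<^sub>1*\<phi>\<^sub>2 + \<phi>\<^sub>2^2) = (6*A^2 - 2*r^2) / (4*B)"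
    unfolding \<phi>\<^sub>1_def \<phi>\<^sub>2_def r_def[symmetric] using assms(1)
    by (simp add: field_simps power2_eq_square)
  also have "\<dots> = - 6 * c"
    using r2 assms(1) by (simp add: field_simps)
  finally show "B * (\<phi>\<^sub>1^2 + 4*\<phi>\<^sub>1*\<phi>\<^sub>2 + \<phi>\<^sub>2^2) = - 6 * c" .
qed

lemma riccati_rate_coefficient:
  fixes B M N \<sigma> :: real
  assumes "B \<noteq> 0" and "- (6 * (M + N)) / B > 0" and "\<sigma>^2 = 1"
  shows "6 * (M + N) * (\<sigma> / sqrt (- (6 * (M + N)) / B))^2 = - B"
proof -
  have "M + N \<noteq> 0"
  proof
    assume "M + N = 0"
    with assms(2) show False by (metis div_0 minus_zero mult_zero_right less_irrefl)
  qed
  moreover have "(\<sigma> / sqrt (- (6 * (M + N)) / B))^2 = B / (- (6 * (M + N)))"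
    using assms(2,3) by (simp add: power_divide)
  ultimately show ?thesis using assms(1) by (simp add: field_simps)
qed

theorem mainTheorem6:
  fixes A B M N c C\<^sub>1 \<sigma> :: real
  assumes "B \<noteq> 0" and "c \<noteq> 0" and "A^2 + 4 * B * c > 0"
    and "- (6 * (M + N)) / B > 0"
    and "\<sigma> = 1 \<or> \<sigma> = -1"
  defines "K \<equiv> - (6 * (M + N)) / B"
    and "\<phi>\<^sub>1 \<equiv> - (A + sqrt (3 * (A^2 + 4 * B * c))) / (2 * B)"
    and "\<phi>\<^sub>2 \<equiv> - (A - sqrt (3 * (A^2 + 4 * B * c))) / (2 * B)"
  shows "pde_solution_on A B M N
           (\<lambda>x y t. \<phi>\<^sub>1 + (\<phi>\<^sub>2 - \<phi>\<^sub>1) /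
              (1 + exp (\<sigma> * ((\<phi>\<^sub>1 - \<phi>\<^sub>2) / sqrt K) * (C\<^sub>1 - x - y + c * t)))) UNIV
       \<and> pde_solution_on A B M N
           (\<lambda>x y t. \<phi>\<^sub>1 + (\<phi>\<^sub>2 - \<phi>\<^sub>1) /
              (1 - exp (\<sigma> * ((\<phi>\<^sub>2 - \<phi>\<^sub>1) / sqrt K) * (C\<^sub>1 - x - y + c * t))))
           {(x, y, t). 1 - exp (\<sigma> * ((\<phi>\<^sub>2 - \<phi>\<^sub>1) / sqrt K) * (C\<^sub>1 - x - y + c * t)) \<noteq> 0}"
proof -
  note roots = double_roots_relations[OF assms(1) less_imp_le[OF assms(3)], folded \<phi>\<^sub>1_def \<phi>\<^sub>2_def]
  have coeff: "6 * (M + N) * (\<sigma> / sqrt K)^2 = - B"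
    unfolding K_def using assms(5) by (intro riccati_rate_coefficient assms(1,4)) auto
  have wave: "pde_solution_on A B M N
      (\<lambda>x y t. \<phi>\<^sub>1 + (\<phi>\<^sub>2 - \<phi>\<^sub>1) / (1 + k * exp (a * (\<phi>\<^sub>2 - \<phi>\<^sub>1) * (C\<^sub>1 - x - y + c*t))))
      {(x,y,t). C\<^sub>1 - x - y + c*t \<in> {\<xi>. 1 + k * exp (a * (\<phi>\<^sub>2 - \<phi>\<^sub>1) * \<xi>) \<noteq> 0}}"
    if "6 * (M + N) * a^2 = - B" for a k
  proof (rule pde_solution_on_riccati_wave[OF _ _ roots that])
    show "open {\<xi>::real. 1 + k * exp (a * (\<phi>\<^sub>2 - \<phi>\<^sub>1) * \<xi>) \<noteq> 0}"
      by (rule open_Collect_neq) (auto intro!: continuous_intros)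
  qed (use riccati_solution_has_real_derivative[of k a "\<phi>\<^sub>2 - \<phi>\<^sub>1" _ \<phi>\<^sub>1] in auto)
  have exponent1: "- (\<sigma> / sqrt K) * (\<phi>\<^sub>2 - \<phi>\<^sub>1) = \<sigma> * ((\<phi>\<^sub>1 - \<phi>\<^sub>2) / sqrt K)"
    and exponent2: "\<sigma> / sqrt K * (\<phi>\<^sub>2 - \<phi>\<^sub>1) = \<sigma> * ((\<phi>\<^sub>2 - \<phi>\<^sub>1) / sqrt K)"
    by (simp_all add: divide_simps algebra_simps)
  have "{(x,y,t). C\<^sub>1 - x - y + c*t
      \<in> {\<xi>. 1 + 1 * exp (\<sigma> * ((\<phi>\<^sub>1 - \<phi>\<^sub>2) / sqrt K) * \<xi>) \<noteq> 0}} = UNIV"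
    by (auto simp: add_pos_pos[OF zero_less_one exp_gt_zero, THEN less_imp_neq, symmetric])
  with wave[of "- (\<sigma> / sqrt K)" 1] wave[of "\<sigma> / sqrt K" "-1"] coeff
  show ?thesis
    unfolding exponent1 exponent2 by simp
qed

end
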